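(* Let $\beta_1,\dots,\beta_N>0$ satisfy $(d-1)\sum_i\beta_i^2+(\sum_i\beta_i)^2=1$ and suppose the channel $T_\beta$ has marginals $(T_\beta)_i(\rho)=p_i\rho+(1-p_i)\frac Id$ for all pure states $\rho$. Then $N+(d^2-1)\sum_{i=1}^Np_i=d(d-1)+\frac{\big(\sum_{i=1}^N\sqrt{(d^2-1)p_i+1}\big)^2}{N+d-1}$.
   Context: Fix $d\ge2$, $N\ge1$. For a permutation $\sigma$ of $\{0,\dots,N-1\}$, $\Pi_\sigma(v_0\otimes\cdots\otimes v_{N-1})=v_{\sigma^{-1}(0)}\otimes\cdots\otimes v_{\sigma^{-1}(N-1)}$ on $(\mathbb C^d)^{\otimes N}$; $P_\beta=\frac1{N!}\sum_\sigma\beta_{\sigma(0)+1}\Pi_\sigma$ and $T_\beta(\rho)=\frac{dN(N+d-1)}{\binom{N+d-1}{N}}P_\beta(\rho\otimes I^{\otimes(N-1)})P_\beta^{\mathsf T}$, a quantum channel $\mathcal M_d\to\mathcal M_d^{\otimes N}$, with marginals $(T_\beta)_i(\rho)=\mathrm{Tr}_{\{1,\dots,N\}\setminus\{i\}}T_\beta(\rho)$ (output factors labelled $1,\dots,N$). *)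

theory Defs
  imports "HOL-Analysis.Analysis" "HOL-Combinatorics.Permutations"
begin

text \<open>Operators on (C^d)^{tensor N} are represented as complex matrices indexed by
multi-indices j : {0..N-1} -> {0..d-1} (extensional functions); entry (j,i) is
the coefficient of e_j in the image of e_i. Operators on C^d are matrices
nat => nat => complex indexed by {0..d-1}.\<close>

type_synonym top = "(nat \<Rightarrow> nat) \<Rightarrow> (nat \<Rightarrow> nat) \<Rightarrow> complex"

definition midx :: "nat \<Rightarrow> nat \<Rightarrow> (nat \<Rightarrow> nat) set" where
  "midx d N = PiE {..<N} (\<lambda>_. {..<d})"

definition op_mult :: "nat \<Rightarrow> nat \<Rightarrow> top \<Rightarrow> top \<Rightarrow> top" where
  "op_mult d N A B = (\<lambda>j i. \<Sum>k\<in>midx d N. A j k * B k i)"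

definition op_transpose :: "top \<Rightarrow> top" where
  "op_transpose A = (\<lambda>j i. A i j)"

text \<open>Pi_sigma (v_0 x ... x v_{N-1}) = v_{sigma^-1 0} x ... x v_{sigma^-1 (N-1)}:
it maps e_i to e_{i o sigma^-1}, so its (j,i) entry is 1 iff i = j o sigma.\<close>
definition perm_op :: "(nat \<Rightarrow> nat) \<Rightarrow> top" where
  "perm_op \<sigma> = (\<lambda>j i. if i = j \<circ> \<sigma> then 1 else 0)"

definition P_beta :: "nat \<Rightarrow> (nat \<Rightarrow> real) \<Rightarrow> top" where
  "P_beta N \<beta> = (\<lambda>j i. (1 / of_nat (fact N)) *
     (\<Sum>\<sigma>\<in>{\<sigma>. \<sigma> permutes {..<N}}. of_real (\<beta> (\<sigma> 0 + 1)) * perm_op \<sigma> j i))"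

text \<open>rho tensor I^{tensor (N-1)}, rho acting on the first tensor factor (position 0).\<close>
definition ext_first :: "nat \<Rightarrow> (nat \<Rightarrow> nat \<Rightarrow> complex) \<Rightarrow> top" where
  "ext_first N \<rho> = (\<lambda>j i. \<rho> (j 0) (i 0) * (if \<forall>k\<in>{1..<N}. j k = i k then 1 else 0))"

definition T_beta :: "nat \<Rightarrow> nat \<Rightarrow> (nat \<Rightarrow> real) \<Rightarrow> (nat \<Rightarrow> nat \<Rightarrow> complex) \<Rightarrow> top" where
  "T_beta d N \<beta> \<rho> = (\<lambda>j i.
     of_real (real d * real N * real (N + d - 1) / real ((N + d - 1) choose N)) *
     op_mult d N (op_mult d N (P_beta N \<beta>) (ext_first N \<rho>)) (op_transpose (P_beta N \<beta>)) j i)"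

text \<open>Marginal on output factor i (labels 1..N; factor i is tensor position i-1):
partial trace over all other factors.\<close>
definition marginal :: "nat \<Rightarrow> nat \<Rightarrow> nat \<Rightarrow> top \<Rightarrow> nat \<Rightarrow> nat \<Rightarrow> complex" where
  "marginal d N i X = (\<lambda>a b. \<Sum>x\<in>midx d N. if x (i - 1) = a then X x (x(i - 1 := b)) else 0)"

definition pure_state :: "(nat \<Rightarrow> complex) \<Rightarrow> nat \<Rightarrow> nat \<Rightarrow> complex" where
  "pure_state v = (\<lambda>a b. v a * cnj (v b))"

end

theory Submission
  imports Defs
begin

text \<open>Only one entry of the hypothesis is used: the \<open>(0,0)\<close> entry of the \<open>i\<close>-th marginal of
\<open>T\<^sub>\<beta>(|e\<^sub>0\<rangle>\<langle>e\<^sub>0|)\<close>, which determines \<open>p\<^sub>i\<close>. The diagonal entry of \<open>T\<^sub>\<beta>(|e\<^sub>0\<rangle>\<langle>e\<^sub>0|)\<close> at a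
multi-index \<open>x\<close> is, up to normalisation, \<open>\<Sum>\<^sub>k (\<Sum>\<^bsub>x\<circ>\<sigma> = k\<^esub> \<beta>\<^bsub>\<sigma>(0)+1\<^esub>)\<^sup>2\<close> over the \<open>k\<close> with
\<open>k\<^sub>0 = 0\<close>. Counting the permutations that preserve the colouring \<open>x\<close> turns this into
\<open>(N-1)! w(x) (\<Sum>\<^bsub>x\<^sub>l = 0\<^esub> \<beta>\<^bsub>l+1\<^esub>)\<^sup>2\<close> with a stabiliser weight \<open>w\<close>. Summing over the \<open>x\<close> with
\<open>x\<^bsub>i-1\<^esub> = 0\<close> gives a quadratic form in \<open>\<beta>\<close> whose coefficient of \<open>\<beta>\<^bsub>l+1\<^esub>\<beta>\<^bsub>l'+1\<^esub>\<close>
depends only on \<open>|{i-1, l, l'}|\<close>; with the normalisation of \<open>\<beta>\<close> this yields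
\<open>(d\<^sup>2-1) p\<^sub>i + 1 = d ((d-1) \<beta>\<^sub>i + \<Sum>\<beta>)\<^sup>2\<close>. Taking square roots and summing over \<open>i\<close> gives the
identity.\<close>

section \<open>Colour-preserving permutations\<close>

lemma card_colour_stabilizer:
  fixes x :: "'a \<Rightarrow> 'b"
  assumes S: "finite S" and C: "finite C" and xS: "x ` S \<subseteq> C"
  shows "card {\<rho>. \<rho> permutes S \<and> (\<forall>l\<in>S. x (\<rho> l) = x l)}
         = (\<Prod>a\<in>C. fact (card {l\<in>S. x l = a}))"
proof -
  define L where "L a = {l\<in>S. x l = a}" for a
  define Stab where "Stab = {\<rho>. \<rho> permutes S \<and> (\<forall>l\<in>S. x (\<rho> l) = x l)}"
  define Blocks where "Blocks = PiE C (\<lambda>a. {\<pi>. \<pi> permutes L a})"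
  define restr where "restr \<rho> = (\<lambda>a\<in>C. \<lambda>l. if l \<in> L a then \<rho> l else l)" for \<rho> :: "'a \<Rightarrow> 'a"
  define glue where "glue f = (\<lambda>l. if l \<in> S then f (x l) l else l)" for f :: "'b \<Rightarrow> 'a \<Rightarrow> 'a"
  have finL: "finite (L a)" for a using S by (simp add: L_def)
  have restr_Blocks: "restr \<rho> \<in> Blocks" if r: "\<rho> \<in> Stab" for \<rho>
  proof -
    have p: "\<rho> permutes S" and px: "\<forall>l\<in>S. x (\<rho> l) = x l" using r by (auto simp: Stab_def)
    have "(\<lambda>l. if l \<in> L a then \<rho> l else l) permutes L a" for a
    proof (rule bij_imp_permutes)
      have sub: "\<rho> ` L a \<subseteq> L a" using px permutes_in_image[OF p] by (auto simp: L_def)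
      have inj: "inj_on \<rho> (L a)" using permutes_inj_on[OF p] .
      have "\<rho> ` L a = L a" using endo_inj_surj[OF finL sub inj] .
      then show "bij_betw (\<lambda>l. if l \<in> L a then \<rho> l else l) (L a) (L a)"
        using inj unfolding bij_betw_def by (auto simp: inj_on_def image_def)
    qed auto
    then show ?thesis by (auto simp: restr_def Blocks_def)
  qed
  have glue_Stab: "glue f \<in> Stab" if f: "f \<in> Blocks" for f
  proof -
    have fp: "f a permutes L a" if "a \<in> C" for a using f that by (auto simp: Blocks_def)
    have mem: "f (x l) l \<in> L (x l)" if "l \<in> S" for l
      using permutes_in_image[OF fp[of "x l"]] that xS by (auto simp: L_def)
    have xpres: "\<forall>l\<in>S. x (glue f l) = x l"
      using mem by (auto simp: glue_def L_def)
    have img: "glue f ` S \<subseteq> S" using mem by (auto simp: glue_def L_def)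
    have inj: "inj_on (glue f) S"
    proof (rule inj_onI)
      fix l l' assume l: "l \<in> S" and l': "l' \<in> S" and eq: "glue f l = glue f l'"
      have "x l = x l'" using xpres l l' eq by metis
      then have "f (x l) l = f (x l) l'" using eq l l' by (simp add: glue_def)
      then show "l = l'" using permutes_inj[OF fp[of "x l"]] l xS by (auto simp: inj_def)
    qed
    have "glue f ` S = S" using endo_inj_surj[OF S img inj] .
    then have "glue f permutes S"
      using inj by (intro bij_imp_permutes) (simp_all add: bij_betw_def glue_def)
    then show ?thesis using xpres by (simp add: Stab_def)
  qed
  have glue_restr: "glue (restr \<rho>) = \<rho>" if "\<rho> \<in> Stab" for \<rho>
  proof
    fix l
    have "\<rho> permutes S" using that by (simp add: Stab_def)
    then show "glue (restr \<rho>) l = \<rho> l"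
      using xS permutes_not_in[of \<rho> S l] by (auto simp: glue_def restr_def L_def)
  qed
  have restr_glue: "restr (glue f) = f" if f: "f \<in> Blocks" for f
  proof
    fix a
    have fp: "f a permutes L a" if "a \<in> C" for a using f that by (auto simp: Blocks_def)
    show "restr (glue f) a = f a"
    proof (cases "a \<in> C")
      case True
      show ?thesis
        using True permutes_not_in[OF fp[OF True]] by (auto simp: restr_def glue_def L_def)
    next
      case False
      then show ?thesis using f by (auto simp: restr_def Blocks_def PiE_def extensional_def)
    qed
  qed
  have "bij_betw restr Stab Blocks"
    by (rule bij_betw_byWitness[where f'=glue]) (use restr_Blocks glue_Stab glue_restr restr_glue in auto)
  then have "card Stab = card Blocks" by (rule bij_betw_same_card)
  also have "\<dots> = (\<Prod>a\<in>C. fact (card (L a)))"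
    by (simp add: Blocks_def card_PiE C card_permutations finL)
  finally show ?thesis by (simp add: Stab_def L_def)
qed

lemma card_permutes_same_colouring_with_value:
  assumes \<sigma>: "\<sigma> permutes S" and a: "a \<in> S" and l: "l \<in> S" and xl: "x l = x (\<sigma> a)"
  shows "card {\<tau>. \<tau> permutes S \<and> x \<circ> \<tau> = x \<circ> \<sigma> \<and> \<tau> a = l}
       = card {\<rho>. \<rho> permutes (S - {\<sigma> a}) \<and> (\<forall>j\<in>S - {\<sigma> a}. x (\<rho> j) = x j)}"
proof -
  define k where "k = \<sigma> a"
  define t where "t = Transposition.transpose k l"
  have k: "k \<in> S" using permutes_in_image[OF \<sigma>] a by (simp add: k_def)
  have xt: "x (t m) = x m" for m using xl by (auto simp: t_def k_def Transposition.transpose_def)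
  have tp: "t permutes S" using k l by (simp add: t_def permutes_swap_id)
  have tt: "t (t m) = m" for m by (simp add: t_def)
  define A where "A = {\<rho>. \<rho> permutes (S - {k}) \<and> (\<forall>j\<in>S - {k}. x (\<rho> j) = x j)}"
  define B where "B = {\<tau>. \<tau> permutes S \<and> x \<circ> \<tau> = x \<circ> \<sigma> \<and> \<tau> a = l}"
  have "bij_betw (\<lambda>\<rho>. t \<circ> \<rho> \<circ> \<sigma>) A B"
  proof (rule bij_betw_byWitness[where f'="\<lambda>\<tau>. t \<circ> \<tau> \<circ> inv \<sigma>"])
    show "\<forall>\<rho>\<in>A. t \<circ> (t \<circ> \<rho> \<circ> \<sigma>) \<circ> inv \<sigma> = \<rho>"
      by (auto simp: fun_eq_iff tt permutes_inverses[OF \<sigma>])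
    show "\<forall>\<tau>\<in>B. t \<circ> (t \<circ> \<tau> \<circ> inv \<sigma>) \<circ> \<sigma> = \<tau>"
      by (auto simp: fun_eq_iff tt permutes_inverses[OF \<sigma>])
    show "(\<lambda>\<rho>. t \<circ> \<rho> \<circ> \<sigma>) ` A \<subseteq> B"
    proof clarify
      fix \<rho> assume "\<rho> \<in> A"
      then have rp: "\<rho> permutes (S - {k})" and rx: "\<forall>j\<in>S - {k}. x (\<rho> j) = x j"
        by (auto simp: A_def)
      have rx': "x (\<rho> m) = x m" for m
        using rx permutes_not_in[OF rp, of m] by (cases "m \<in> S - {k}") auto
      have "t \<circ> \<rho> \<circ> \<sigma> permutes S"
        using permutes_subset[OF rp] by (intro permutes_compose \<sigma> tp) auto
      moreover have "\<rho> k = k" using permutes_not_in[OF rp] by auto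
      ultimately show "t \<circ> \<rho> \<circ> \<sigma> \<in> B"
        by (simp add: B_def fun_eq_iff xt rx') (simp add: k_def[symmetric] t_def)
    qed
    show "(\<lambda>\<tau>. t \<circ> \<tau> \<circ> inv \<sigma>) ` B \<subseteq> A"
    proof clarify
      fix \<tau> assume "\<tau> \<in> B"
      then have tp': "\<tau> permutes S" and tx: "x \<circ> \<tau> = x \<circ> \<sigma>" and t0: "\<tau> a = l"
        by (auto simp: B_def)
      have "t \<circ> \<tau> \<circ> inv \<sigma> permutes S" by (intro permutes_compose permutes_inv \<sigma> tp' tp)
      moreover have "(t \<circ> \<tau> \<circ> inv \<sigma>) k = k"
        by (simp add: k_def permutes_inverses[OF \<sigma>] t0 t_def)
      ultimately have "t \<circ> \<tau> \<circ> inv \<sigma> permutes (S - {k})"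
        by (metis (no_types, lifting) Diff_iff permutes_superset singletonD)
      moreover have "x ((t \<circ> \<tau> \<circ> inv \<sigma>) j) = x j" for j
        using fun_cong[OF tx, of "inv \<sigma> j"] by (simp add: xt permutes_inverses[OF \<sigma>])
      ultimately show "t \<circ> \<tau> \<circ> inv \<sigma> \<in> A" by (simp add: A_def)
    qed
  qed
  then have "card A = card B" by (rule bij_betw_same_card)
  then show ?thesis by (simp add: A_def B_def k_def)
qed

lemma card_permutes_with_value:
  assumes S: "finite S" and a: "a \<in> S" and l: "l \<in> S"
  shows "card {\<sigma>. \<sigma> permutes S \<and> \<sigma> a = l} = fact (card S - 1)"
proof -
  have "card {\<tau>. \<tau> permutes S \<and> (\<lambda>_. ()) \<circ> \<tau> = (\<lambda>_. ()) \<circ> id \<and> \<tau> a = l}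
      = card {\<rho>. \<rho> permutes (S - {id a}) \<and> (\<forall>j\<in>S - {id a}. (\<lambda>_. ()) (\<rho> j) = (\<lambda>_. ()) j)}"
    by (rule card_permutes_same_colouring_with_value) (use a l in auto)
  moreover have "card {\<rho>. \<rho> permutes (S - {a})} = fact (card S - 1)"
    using S a by (simp add: card_permutations)
  ultimately show ?thesis by (simp add: comp_def)
qed

lemma sum_comp_eq_sum_card_fibres:
  fixes f :: "'b \<Rightarrow> 'c::comm_semiring_1"
  assumes "finite A" "finite L" "g ` A \<subseteq> L"
  shows "(\<Sum>a\<in>A. f (g a)) = (\<Sum>l\<in>L. f l * of_nat (card {a\<in>A. g a = l}))"
proof -
  have "(\<Sum>a\<in>A. f (g a)) = (\<Sum>l\<in>L. \<Sum>a\<in>{a\<in>A. g a = l}. f (g a))"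
    using sum.group[OF assms, of "\<lambda>a. f (g a)"] by simp
  also have "\<dots> = (\<Sum>l\<in>L. \<Sum>a\<in>{a\<in>A. g a = l}. f l)"
    by (intro sum.cong) auto
  finally show ?thesis by (simp add: mult.commute)
qed

lemma sum_permutes_value:
  fixes f :: "'a \<Rightarrow> 'c::comm_semiring_1"
  assumes S: "finite S" and a: "a \<in> S"
  shows "(\<Sum>\<sigma>\<in>{\<sigma>. \<sigma> permutes S}. f (\<sigma> a)) = of_nat (fact (card S - 1)) * (\<Sum>l\<in>S. f l)"
proof -
  have "(\<Sum>\<sigma>\<in>{\<sigma>. \<sigma> permutes S}. f (\<sigma> a))
      = (\<Sum>l\<in>S. f l * of_nat (card {\<sigma>\<in>{\<sigma>. \<sigma> permutes S}. \<sigma> a = l}))"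
    using S a by (intro sum_comp_eq_sum_card_fibres) (auto simp: finite_permutations intro: permutes_in_image[THEN iffD2])
  also have "\<dots> = (\<Sum>l\<in>S. f l * of_nat (fact (card S - 1)))"
    using card_permutes_with_value[OF S a] by (intro sum.cong) simp_all
  finally show ?thesis by (simp add: sum_distrib_right mult.commute)
qed

section \<open>Stabiliser weights\<close>

definition colour_count :: "'a set \<Rightarrow> ('a \<Rightarrow> 'b) \<Rightarrow> 'b \<Rightarrow> nat" where
  "colour_count S x a = card {l\<in>S. x l = a}"

definition stab_weight :: "nat \<Rightarrow> 'a set \<Rightarrow> ('a \<Rightarrow> nat) \<Rightarrow> nat" where
  "stab_weight d S x = fact (colour_count S x 0 - 1) * (\<Prod>b\<in>{1..<d}. fact (colour_count S x b))"

lemma card_colour_stabilizer_Diff: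
  assumes S: "finite S" and x: "x ` S \<subseteq> {..<d}" and k: "k \<in> S" and xk: "x k = 0"
  shows "card {\<rho>. \<rho> permutes (S - {k}) \<and> (\<forall>j\<in>S - {k}. x (\<rho> j) = x j)} = stab_weight d S x"
proof -
  have d: "{..<d} = insert 0 {1..<d}" using x k xk by force
  have zero: "card {l\<in>S - {k}. x l = 0} = colour_count S x 0 - 1"
  proof -
    have "{l\<in>S - {k}. x l = 0} = {l\<in>S. x l = 0} - {k}" by auto
    then show ?thesis using S k xk by (simp add: colour_count_def)
  qed
  have nonzero: "card {l\<in>S - {k}. x l = b} = colour_count S x b" if "b \<in> {1..<d}" for b
  proof -
    have "{l\<in>S - {k}. x l = b} = {l\<in>S. x l = b}" using that xk by auto
    then show ?thesis by (simp add: colour_count_def)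
  qed
  have "card {\<rho>. \<rho> permutes (S - {k}) \<and> (\<forall>j\<in>S - {k}. x (\<rho> j) = x j)}
      = (\<Prod>b\<in>insert 0 {1..<d}. fact (card {l\<in>S - {k}. x l = b}))"
    unfolding d[symmetric] by (rule card_colour_stabilizer) (use S x in auto)
  also have "\<dots> = fact (card {l\<in>S - {k}. x l = 0}) * (\<Prod>b\<in>{1..<d}. fact (card {l\<in>S - {k}. x l = b}))"
    by simp
  also have "\<dots> = stab_weight d S x"
    unfolding zero stab_weight_def using nonzero by (intro arg_cong2[where f="(*)"] refl prod.cong) auto
  finally show ?thesis .
qed

lemma colour_count_insert_upd:
  assumes "finite S" "s \<notin> S"
  shows "colour_count (insert s S) (x(s:=a)) b = colour_count S x b + (if a = b then 1 else 0)"
proof -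
  have "{l\<in>insert s S. (x(s:=a)) l = b}
      = (if a = b then insert s {l\<in>S. x l = b} else {l\<in>S. x l = b})"
    using assms by auto
  then show ?thesis using assms by (simp add: colour_count_def)
qed

lemma sum_colour_count:
  fixes d :: nat
  assumes "finite S" "x ` S \<subseteq> {..<d}"
  shows "(\<Sum>a<d. colour_count S x a) = card S"
proof -
  have "S = (\<Union>a<d. {l\<in>S. x l = a})" using assms by auto
  then have "card S = card (\<Union>a<d. {l\<in>S. x l = a})" by simp
  also have "\<dots> = (\<Sum>a<d. colour_count S x a)"
    unfolding colour_count_def by (rule card_UN_disjoint) (use assms in auto)
  finally show ?thesis by simp
qed

lemma stab_weight_insert_upd:
  assumes S: "finite S" "s \<notin> S" and a: "a < d" and zero: "colour_count S x 0 \<ge> 1"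
  shows "stab_weight d (insert s S) (x(s:=a))
       = stab_weight d S x * (if a = 0 then colour_count S x 0 else colour_count S x a + 1)"
proof (cases "a = 0")
  case True
  have other: "(\<Prod>b\<in>{1..<d}. fact (colour_count (insert s S) (x(s:=0)) b))
      = (\<Prod>b\<in>{1..<d}. fact (colour_count S x b))"
    using colour_count_insert_upd[OF S, of x 0] by (intro prod.cong) auto
  have "fact (colour_count (insert s S) (x(s:=0)) 0 - 1)
      = fact (colour_count S x 0 - 1) * colour_count S x 0"
    using zero fact_reduce[of "colour_count S x 0", where 'a=nat]
    by (simp add: colour_count_insert_upd[OF S] mult.commute)
  then show ?thesis
    unfolding True stab_weight_def other by simp
next
  case False
  have "(\<Prod>b\<in>{1..<d}. fact (colour_count (insert s S) (x(s:=a)) b))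
      = (\<Prod>b\<in>{1..<d}. fact (colour_count S x b) * (if b = a then colour_count S x a + 1 else 1))"
    using False colour_count_insert_upd[OF S, of x a] by (intro prod.cong) auto
  also have "\<dots> = (\<Prod>b\<in>{1..<d}. fact (colour_count S x b)) * (colour_count S x a + 1)"
    using False a by (simp add: prod.distrib prod.delta)
  finally show ?thesis
    using False colour_count_insert_upd[OF S, of x a 0] by (simp add: stab_weight_def algebra_simps)
qed

lemma sum_stab_weight_insert_upd:
  assumes S: "finite S" "s \<notin> S" and x: "x ` S \<subseteq> {..<d}" and zero: "colour_count S x 0 \<ge> 1"
  shows "(\<Sum>a<d. stab_weight d (insert s S) (x(s:=a))) = stab_weight d S x * (card S + d - 1)"
proof -
  have d: "d \<ge> 1"
    using zero x by (auto simp: colour_count_def card_gt_0_iff Suc_le_eq)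
  have ones: "(\<Sum>a<d. if a = 0 then 0 else 1) = d - 1"
    by (induction d) auto
  have "(\<Sum>a<d. if a = 0 then colour_count S x 0 else colour_count S x a + 1)
      = (\<Sum>a<d. colour_count S x a + (if a = 0 then 0 else 1))"
    by (rule sum.cong) auto
  also have "\<dots> = (\<Sum>a<d. colour_count S x a) + (d - 1)"
    by (simp only: sum.distrib ones)
  also have "\<dots> = card S + d - 1"
    using sum_colour_count[OF S(1) x] d by simp
  finally have "(\<Sum>a<d. if a = 0 then colour_count S x 0 else colour_count S x a + 1) = card S + d - 1" .
  then show ?thesis
    by (simp add: stab_weight_insert_upd[OF S _ zero] flip: sum_distrib_left)
qed

lemma sum_stab_weight_zero_on_PiE:
  fixes d :: nat
  assumes T: "finite T" "T \<noteq> {}" and U: "finite U" "U \<inter> T = {}" and d: "d \<ge> 1"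
  shows "(\<Sum>x \<in> PiE (T \<union> U) (\<lambda>l. if l \<in> T then {0} else {..<d}). stab_weight d (T \<union> U) x)
       = fact (card T - 1) * pochhammer (d + card T - 1) (card U)"
  using U
proof (induction U rule: finite_induct)
  case empty
  define z where "z = (\<lambda>l\<in>T. 0::nat)"
  have "PiE T (\<lambda>l. if l \<in> T then {0} else {..<d}) = {z}"
    by (auto simp: PiE_iff extensional_def fun_eq_iff z_def)
  moreover have "colour_count T z b = (if b = 0 then card T else 0)" for b
    by (simp add: colour_count_def z_def)
  ultimately show ?case by (simp add: stab_weight_def)
next
  case (insert s U)
  define S where "S = T \<union> U"
  define D where "D = (\<lambda>l. if l \<in> T then {0} else {..<d::nat})"
  have S: "finite S" "s \<notin> S" using insert T by (auto simp: S_def)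
  have Ds: "D s = {..<d}" using insert by (auto simp: D_def)
  have range: "x ` S \<subseteq> {..<d}" if "x \<in> PiE S D" for x
    using that d by (force simp: D_def PiE_iff split: if_splits)
  have zero: "colour_count S x 0 \<ge> 1" if "x \<in> PiE S D" for x
  proof -
    obtain t where "t \<in> T" using T by auto
    then have "t \<in> {l\<in>S. x l = 0}" using that by (force simp: S_def D_def PiE_iff)
    then show ?thesis
      using S(1) by (auto simp: colour_count_def Suc_le_eq card_gt_0_iff)
  qed
  have "(\<Sum>x \<in> PiE (insert s S) D. stab_weight d (insert s S) x)
      = (\<Sum>(a, x) \<in> D s \<times> PiE S D. stab_weight d (insert s S) (x(s:=a)))"
    unfolding PiE_insert_eq by (subst sum.reindex[OF inj_combinator[OF S(2)]]) (simp add: case_prod_unfold)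
  also have "\<dots> = (\<Sum>x \<in> PiE S D. \<Sum>a<d. stab_weight d (insert s S) (x(s:=a)))"
    unfolding Ds by (subst sum.cartesian_product[symmetric]) (rule sum.swap)
  also have "\<dots> = (\<Sum>x \<in> PiE S D. stab_weight d S x) * (card S + d - 1)"
    by (simp add: sum_stab_weight_insert_upd[OF S range zero] sum_distrib_right)
  also have "\<dots> = fact (card T - 1) * pochhammer (d + card T - 1) (card U) * (card S + d - 1)"
    using insert.IH insert.prems by (simp add: S_def D_def)
  also have "\<dots> = fact (card T - 1) * pochhammer (d + card T - 1) (card (insert s U))"
  proof -
    have "card S = card T + card U"
      using insert T by (simp add: S_def card_Un_disjoint Int_commute)
    moreover have "card T \<ge> 1" using T by (simp add: Suc_le_eq card_gt_0_iff)
    ultimately show ?thesis using insert d by (simp add: pochhammer_Suc ac_simps)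
  qed
  finally show ?case
    by (simp add: S_def D_def insert_commute)
qed

lemma sum_stab_weight_zero_on_midx:
  assumes T: "T \<subseteq> {..<N}" "T \<noteq> {}" and d: "d \<ge> 1"
  shows "(\<Sum>x\<in>{x\<in>midx d N. \<forall>m\<in>T. x m = 0}. stab_weight d {..<N} x)
       = fact (card T - 1) * pochhammer (d + card T - 1) (N - card T)"
proof -
  have fT: "finite T" using T finite_subset by blast
  have N: "T \<union> ({..<N} - T) = {..<N}" using T by auto
  have eq: "{x\<in>midx d N. \<forall>m\<in>T. x m = 0} = PiE {..<N} (\<lambda>l. if l \<in> T then {0} else {..<d})"
    unfolding midx_def using T d
    by (auto simp: PiE_iff extensional_def subset_iff split: if_splits)
  show ?thesis
    using sum_stab_weight_zero_on_PiE[OF fT T(2) _ _ d, of "{..<N} - T"]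
    unfolding N eq card_Diff_subset[OF fT T(1)] by auto
qed

lemma finite_midx: "finite (midx d N)"
  by (simp add: midx_def finite_PiE)

lemma comp_permutes_midx:
  assumes "x \<in> midx d N" "\<sigma> permutes {..<N}"
  shows "x \<circ> \<sigma> \<in> midx d N"
  using assms permutes_in_image[OF assms(2)] permutes_not_in[OF assms(2)]
  by (auto simp: midx_def PiE_iff extensional_def)

definition perm_coeff :: "nat \<Rightarrow> (nat \<Rightarrow> real) \<Rightarrow> (nat \<Rightarrow> nat) \<Rightarrow> (nat \<Rightarrow> nat) \<Rightarrow> real" where
  "perm_coeff N \<beta> x k = (\<Sum>\<sigma>\<in>{\<sigma>. \<sigma> permutes {..<N} \<and> x \<circ> \<sigma> = k}. \<beta> (\<sigma> 0 + 1))"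

definition zero_weight :: "nat \<Rightarrow> (nat \<Rightarrow> real) \<Rightarrow> (nat \<Rightarrow> nat) \<Rightarrow> real" where
  "zero_weight N \<beta> x = (\<Sum>l<N. if x l = 0 then \<beta> (l + 1) else 0)"

lemma card_same_colouring_with_value:
  fixes x :: "nat \<Rightarrow> nat"
  assumes x: "x ` {..<N} \<subseteq> {..<d}" and \<sigma>: "\<sigma> permutes {..<N}" and x\<sigma>: "x (\<sigma> 0) = 0"
    and l: "l < N"
  shows "card {\<tau>. \<tau> permutes {..<N} \<and> x \<circ> \<tau> = x \<circ> \<sigma> \<and> \<tau> 0 = l}
       = (if x l = 0 then stab_weight d {..<N} x else 0)"
proof (cases "x l = 0")
  case True
  have \<sigma>0: "\<sigma> 0 < N" using permutes_in_image[OF \<sigma>, of 0] l by auto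
  have "card {\<tau>. \<tau> permutes {..<N} \<and> x \<circ> \<tau> = x \<circ> \<sigma> \<and> \<tau> 0 = l}
      = card {\<rho>. \<rho> permutes ({..<N} - {\<sigma> 0}) \<and> (\<forall>j\<in>{..<N} - {\<sigma> 0}. x (\<rho> j) = x j)}"
    using True x\<sigma> l by (intro card_permutes_same_colouring_with_value \<sigma>) auto
  also have "\<dots> = stab_weight d {..<N} x"
    using \<sigma>0 by (intro card_colour_stabilizer_Diff x x\<sigma>) auto
  finally show ?thesis using True by simp
next
  case False
  have "{\<tau>. \<tau> permutes {..<N} \<and> x \<circ> \<tau> = x \<circ> \<sigma> \<and> \<tau> 0 = l} = {}"
    using False x\<sigma> by (auto simp: fun_eq_iff)
  then show ?thesis using False by (metis card.empty)
qed

lemma perm_coeff_orbit: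
  fixes x :: "nat \<Rightarrow> nat"
  assumes x: "x ` {..<N} \<subseteq> {..<d}" and \<sigma>: "\<sigma> permutes {..<N}" and x\<sigma>: "x (\<sigma> 0) = 0"
    and N: "0 < N"
  shows "perm_coeff N \<beta> x (x \<circ> \<sigma>) = stab_weight d {..<N} x * zero_weight N \<beta> x"
proof -
  define A where "A = {\<tau>. \<tau> permutes {..<N} \<and> x \<circ> \<tau> = x \<circ> \<sigma>}"
  have A0: "\<tau> 0 < N" if "\<tau> \<in> A" for \<tau>
    using that permutes_in_image[of \<tau> "{..<N}" 0] N by (auto simp: A_def)
  have "perm_coeff N \<beta> x (x \<circ> \<sigma>) = (\<Sum>\<tau>\<in>A. \<beta> (\<tau> 0 + 1))"
    by (simp add: perm_coeff_def A_def)
  also have "\<dots> = (\<Sum>l<N. \<beta> (l + 1) * card {\<tau>\<in>A. \<tau> 0 = l})"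
    using A0 by (intro sum_comp_eq_sum_card_fibres) (auto simp: A_def finite_permutations)
  also have "\<dots> = (\<Sum>l<N. \<beta> (l + 1) * (if x l = 0 then stab_weight d {..<N} x else 0))"
    using card_same_colouring_with_value[OF x \<sigma> x\<sigma>] by (intro sum.cong) (simp_all add: A_def)
  also have "\<dots> = stab_weight d {..<N} x * zero_weight N \<beta> x"
    by (simp add: zero_weight_def sum_distrib_left if_distrib mult.commute cong: if_cong)
  finally show ?thesis .
qed

lemma sum_perm_coeff_sq:
  assumes x: "x \<in> midx d N" and N: "0 < N"
  shows "(\<Sum>k\<in>{k\<in>midx d N. k 0 = 0}. (perm_coeff N \<beta> x k)^2)
       = fact (N - 1) * stab_weight d {..<N} x * (zero_weight N \<beta> x)^2"
proof -
  define Z where "Z = {k\<in>midx d N. k 0 = 0}"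
  define P where "P = {\<sigma>. \<sigma> permutes {..<N} \<and> x (\<sigma> 0) = 0}"
  have fin: "finite P" "finite Z"
    by (simp_all add: P_def Z_def finite_midx finite_permutations)
  have range: "x ` {..<N} \<subseteq> {..<d}" using x by (auto simp: midx_def)
  have into: "x \<circ> \<sigma> \<in> Z" if "\<sigma> \<in> P" for \<sigma>
    using that comp_permutes_midx[OF x] by (simp add: P_def Z_def)
  have fibre: "{\<sigma>\<in>P. x \<circ> \<sigma> = k} = {\<sigma>. \<sigma> permutes {..<N} \<and> x \<circ> \<sigma> = k}" if "k \<in> Z" for k
    using that by (auto simp: P_def Z_def)
  \<comment> \<open>every \<open>k\<close> occurring in the sum is \<open>x \<circ> \<sigma>\<close>, whose coefficient does not depend on \<open>\<sigma>\<close>\<close>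
  have "(\<Sum>k\<in>Z. (perm_coeff N \<beta> x k)^2)
      = (\<Sum>k\<in>Z. \<Sum>\<sigma>\<in>{\<sigma>\<in>P. x \<circ> \<sigma> = k}. \<beta> (\<sigma> 0 + 1) * perm_coeff N \<beta> x (x \<circ> \<sigma>))"
    by (intro sum.cong) (simp_all add: fibre power2_eq_square perm_coeff_def sum_distrib_right)
  also have "\<dots> = (\<Sum>\<sigma>\<in>P. \<beta> (\<sigma> 0 + 1) * perm_coeff N \<beta> x (x \<circ> \<sigma>))"
    using into by (intro sum.group fin) auto
  also have "\<dots> = (\<Sum>\<sigma>\<in>P. \<beta> (\<sigma> 0 + 1)) * (stab_weight d {..<N} x * zero_weight N \<beta> x)"
    by (simp add: P_def perm_coeff_orbit[OF range _ _ N] sum_distrib_right)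
  also have "(\<Sum>\<sigma>\<in>P. \<beta> (\<sigma> 0 + 1)) = (\<Sum>\<sigma>\<in>{\<sigma>. \<sigma> permutes {..<N}}. if x (\<sigma> 0) = 0 then \<beta> (\<sigma> 0 + 1) else 0)"
  proof -
    have "P = {\<sigma>\<in>{\<sigma>. \<sigma> permutes {..<N}}. x (\<sigma> 0) = 0}" by (simp add: P_def)
    then show ?thesis by (simp only:) (rule sum.inter_filter, simp add: finite_permutations)
  qed
  also have "\<dots> = fact (N - 1) * zero_weight N \<beta> x"
    using sum_permutes_value[of "{..<N}" 0 "\<lambda>l. if x l = 0 then \<beta> (l + 1) else 0"] N
    by (simp add: zero_weight_def)
  finally show ?thesis by (simp add: Z_def power2_eq_square mult_ac)
qed

section \<open>Entries of \<open>T_beta\<close> at a basis state\<close>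

definition basis0 :: "nat \<Rightarrow> complex" where
  "basis0 a = (if a = 0 then 1 else 0)"

lemma P_beta_eq_perm_coeff: "P_beta N \<beta> j i = of_real (perm_coeff N \<beta> j i / fact N)"
proof -
  have "P_beta N \<beta> j i = (1 / of_nat (fact N)) *
     (\<Sum>\<sigma>\<in>{\<sigma>. \<sigma> permutes {..<N}}. of_real (if j \<circ> \<sigma> = i then \<beta> (\<sigma> 0 + 1) else 0))"
    unfolding P_beta_def perm_op_def by (simp add: if_distrib eq_commute cong: if_cong)
  also have "\<dots> = of_real (perm_coeff N \<beta> j i / fact N)"
    unfolding perm_coeff_def of_real_sum[symmetric]
    by (simp add: sum.inter_filter[symmetric] finite_permutations divide_inverse mult.commute
        cong: conj_cong)
  finally show ?thesis .
qed

lemma midx_eqI: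
  assumes "k \<in> midx d N" "k' \<in> midx d N" "k' 0 = k 0" "\<forall>m\<in>{1..<N}. k' m = k m"
  shows "k' = k"
proof
  fix m show "k' m = k m"
    using assms by (cases "m < N"; cases "m = 0") (auto simp: midx_def PiE_iff extensional_def)
qed

lemma P_beta_ext_first_basis0:
  assumes k: "k \<in> midx d N"
  shows "(\<Sum>k'\<in>midx d N. P_beta N \<beta> x k' * ext_first N (pure_state basis0) k' k)
       = (if k 0 = 0 then P_beta N \<beta> x k else 0)"
proof -
  have "(\<Sum>k'\<in>midx d N. P_beta N \<beta> x k' * ext_first N (pure_state basis0) k' k)
      = (\<Sum>k'\<in>midx d N. if k' = k then (if k 0 = 0 then P_beta N \<beta> x k else 0) else 0)"
    using midx_eqI[OF k] by (intro sum.cong) (auto simp: ext_first_def pure_state_def basis0_def)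
  also have "\<dots> = (if k 0 = 0 then P_beta N \<beta> x k else 0)"
    using k finite_midx[of d N] by simp
  finally show ?thesis .
qed

text \<open>The prefactor of \<open>T_beta\<close>, the factor \<open>1/N!\<close> of each of the two copies of \<open>P_beta\<close>, and the
\<open>(N-1)!\<close> produced by \<open>sum_perm_coeff_sq\<close>.\<close>
definition diag_scale :: "nat \<Rightarrow> nat \<Rightarrow> real" where
  "diag_scale d N = real d * real N * real (N + d - 1) / real ((N + d - 1) choose N) * (fact (N - 1) / (fact N)^2)"

lemma T_beta_basis0_diag:
  assumes x: "x \<in> midx d N" and N: "0 < N"
  shows "T_beta d N \<beta> (pure_state basis0) x x
       = of_real (diag_scale d N * (stab_weight d {..<N} x * (zero_weight N \<beta> x)^2))"
proof -
  have "op_mult d N (op_mult d N (P_beta N \<beta>) (ext_first N (pure_state basis0))) (op_transpose (P_beta N \<beta>)) x x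
      = (\<Sum>k\<in>midx d N. if k 0 = 0 then of_real ((perm_coeff N \<beta> x k)^2 / (fact N)^2) else 0)"
    unfolding op_mult_def op_transpose_def
    by (intro sum.cong refl)
       (simp add: P_beta_ext_first_basis0, simp add: P_beta_eq_perm_coeff power2_eq_square)
  also have "\<dots> = of_real ((\<Sum>k\<in>{k\<in>midx d N. k 0 = 0}. (perm_coeff N \<beta> x k)^2) / (fact N)^2)"
    by (simp add: sum.inter_filter[symmetric] finite_midx sum_divide_distrib)
  also have "\<dots> = of_real (fact (N - 1) / (fact N)^2 * (stab_weight d {..<N} x * (zero_weight N \<beta> x)^2))"
    by (simp add: sum_perm_coeff_sq[OF x N])
  finally show ?thesis by (simp add: T_beta_def diag_scale_def mult_ac)
qed

lemma marginal_T_beta_basis0: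
  assumes i: "1 \<le> i" "i \<le> N"
  shows "marginal d N i (T_beta d N \<beta> (pure_state basis0)) 0 0
       = of_real (diag_scale d N
           * (\<Sum>x\<in>{x\<in>midx d N. x (i - 1) = 0}. stab_weight d {..<N} x * (zero_weight N \<beta> x)^2))"
proof -
  have "marginal d N i (T_beta d N \<beta> (pure_state basis0)) 0 0
      = (\<Sum>x\<in>{x\<in>midx d N. x (i - 1) = 0}. T_beta d N \<beta> (pure_state basis0) x x)"
    unfolding marginal_def by (simp add: sum.inter_filter[symmetric] finite_midx fun_upd_idem)
  then show ?thesis
    using i by (simp add: T_beta_basis0_diag sum_distrib_left)
qed

lemma sum_stab_weight_zero_weight_sq:
  fixes \<beta> :: "nat \<Rightarrow> real"
  assumes d: "d \<ge> 1" and j: "j < N"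
  shows "(\<Sum>x\<in>{x\<in>midx d N. x j = 0}. stab_weight d {..<N} x * (zero_weight N \<beta> x)^2)
       = (\<Sum>l<N. \<Sum>l'<N. \<beta> (l + 1) * \<beta> (l' + 1) *
            real (fact (card {j, l, l'} - 1) * pochhammer (d + card {j, l, l'} - 1) (N - card {j, l, l'})))"
proof -
  define X where "X = {x\<in>midx d N. x j = 0}"
  define z where "z x l = (if x l = 0 then \<beta> (l + 1) else 0)" for x :: "nat \<Rightarrow> nat" and l
  have "(\<Sum>x\<in>X. stab_weight d {..<N} x * (zero_weight N \<beta> x)^2)
      = (\<Sum>x\<in>X. \<Sum>l<N. \<Sum>l'<N. stab_weight d {..<N} x * (z x l * z x l'))"
    by (simp add: zero_weight_def z_def[symmetric] power2_eq_square sum_distrib_left sum_distrib_right mult_ac)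
  also have "\<dots> = (\<Sum>l<N. \<Sum>l'<N. \<Sum>x\<in>X. stab_weight d {..<N} x * (z x l * z x l'))"
    by (simp add: sum.swap[of _ X])
  also have "\<dots> = (\<Sum>l<N. \<Sum>l'<N. \<beta> (l + 1) * \<beta> (l' + 1) *
       real (\<Sum>x\<in>{x\<in>midx d N. \<forall>m\<in>{j, l, l'}. x m = 0}. stab_weight d {..<N} x))"
  proof (intro sum.cong refl)
    fix l l'
    have "(\<Sum>x\<in>X. stab_weight d {..<N} x * (z x l * z x l'))
        = (\<Sum>x\<in>X. if x l = 0 \<and> x l' = 0 then \<beta> (l + 1) * \<beta> (l' + 1) * stab_weight d {..<N} x else 0)"
      by (intro sum.cong) (auto simp: z_def)
    also have "\<dots> = (\<Sum>x\<in>{x\<in>X. x l = 0 \<and> x l' = 0}. \<beta> (l + 1) * \<beta> (l' + 1) * stab_weight d {..<N} x)"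
      by (rule sum.inter_filter[symmetric]) (simp add: X_def finite_midx)
    also have "{x\<in>X. x l = 0 \<and> x l' = 0} = {x\<in>midx d N. \<forall>m\<in>{j, l, l'}. x m = 0}"
      by (auto simp: X_def)
    finally show "(\<Sum>x\<in>X. stab_weight d {..<N} x * (z x l * z x l'))
        = \<beta> (l + 1) * \<beta> (l' + 1) * real (\<Sum>x\<in>{x\<in>midx d N. \<forall>m\<in>{j, l, l'}. x m = 0}. stab_weight d {..<N} x)"
      by (simp add: sum_distrib_left)
  qed
  also have "\<dots> = (\<Sum>l<N. \<Sum>l'<N. \<beta> (l + 1) * \<beta> (l' + 1) *
            real (fact (card {j, l, l'} - 1) * pochhammer (d + card {j, l, l'} - 1) (N - card {j, l, l'})))"
    using j d by (intro sum.cong refl) (subst sum_stab_weight_zero_on_midx, auto)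
  finally show ?thesis by (simp add: X_def)
qed

section \<open>The closed form of the marginal\<close>

definition overlap_coeff :: "nat \<Rightarrow> nat \<Rightarrow> real" where
  "overlap_coeff d t = real d * fact (t - 1) / pochhammer (real d) (t - 1)"

lemma binomial_eq_pochhammer:
  assumes "d \<ge> 1"
  shows "real ((N + d - 1) choose N) = pochhammer (real d) N / fact N"
proof -
  have "real ((N + d - 1) choose N) = pochhammer (real (N + d - 1) - real N + 1) N / fact N"
    by (simp add: binomial_gbinomial gbinomial_pochhammer')
  also have "real (N + d - 1) - real N + 1 = real d" using assms by (simp add: of_nat_diff)
  finally show ?thesis .
qed

lemma diag_scale_mult_eq_overlap_coeff:
  assumes d: "d \<ge> 1" and t: "1 \<le> t" "t \<le> N"
  shows "diag_scale d N * real (fact (t - 1) * pochhammer (d + t - 1) (N - t)) = overlap_coeff d t"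
proof -
  have N: "N = Suc (N - 1)" using t by simp
  have pN: "pochhammer (real d) N = pochhammer (real d) (N - 1) * (real d + real (N - 1))"
    by (subst N) (simp add: pochhammer_Suc)
  have fN: "(fact N :: real) = real N * fact (N - 1)"
    using fact_reduce[of N, where 'a=real] t by simp
  have split: "pochhammer (real d) (N - 1)
      = pochhammer (real d) (t - 1) * pochhammer (real d + real (t - 1)) (N - t)"
    using pochhammer_product'[of "real d" "t - 1" "N - t"] t by simp
  have e1: "real (d + t - 1) = real d + real (t - 1)" using t by simp
  have e2: "real (N + d - 1) = real d + real (N - 1)" using t d by simp
  have pos: "pochhammer (real d) (t - 1) > 0" "pochhammer (real d + real (t - 1)) (N - t) > 0"
    "real d + real (N - 1) > 0" "(fact (N - 1) :: real) > 0" "real N > 0"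
    using d t by (auto intro!: pochhammer_pos)
  have field: "\<And>A B E F n c f. A > 0 \<Longrightarrow> B > 0 \<Longrightarrow> E > 0 \<Longrightarrow> F > 0 \<Longrightarrow> n > 0 \<Longrightarrow>
     c * n * E / (A * B * E / (n * F)) * (F / (n * F)^2) * (f * B) = c * f / (A::real)"
    by (simp add: field_simps power2_eq_square)
  show ?thesis
    unfolding diag_scale_def binomial_eq_pochhammer[OF d] pN split e2 overlap_coeff_def fN
      of_nat_mult of_nat_fact pochhammer_of_nat[symmetric] e1
    by (rule field[OF pos])
qed

lemma overlap_coeff_card:
  assumes d: "d \<ge> 2"
  shows "overlap_coeff d (card {j, l, l'}) = (2
     + (real d - 1) * ((if l = l' then 1 else 0) + (if l = j then 1 else 0) + (if l' = j then 1 else 0))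
     + (real d - 1)^2 * (if l = j \<and> l' = j then 1 else 0)) / (real d + 1)"
proof -
  have one: "overlap_coeff d 1 = real d" by (simp add: overlap_coeff_def)
  have two: "overlap_coeff d 2 = 1" using d by (simp add: overlap_coeff_def numeral_2_eq_2)
  have three: "overlap_coeff d 3 = 2 / (real d + 1)"
  proof -
    have "pochhammer (real d) 2 = real d * (real d + 1)" by (simp add: numeral_2_eq_2 pochhammer_Suc)
    then show ?thesis using d by (simp add: overlap_coeff_def numeral_2_eq_2)
  qed
  have "real d * (real d + 1) = 2 + (real d - 1) * 3 + (real d - 1)^2"
    by (simp add: power2_eq_square algebra_simps)
  then consider "l = j" "l' = j" | "card {j, l, l'} = 2" "l = j \<or> l' = j \<or> l = l'"
    "\<not> (l = j \<and> l' = j)" | "card {j, l, l'} = 3" "l \<noteq> j" "l' \<noteq> j" "l \<noteq> l'"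
    by (cases "l = j"; cases "l' = j"; cases "l = l'") (auto simp: card_insert_if)
  then show ?thesis
  proof cases
    case 1
    then show ?thesis using one \<open>real d * (real d + 1) = _\<close> by (simp add: field_simps)
  next
    case 2
    then show ?thesis using two by (auto simp: field_simps)
  next
    case 3
    then show ?thesis using three by (simp add: numeral_3_eq_3)
  qed
qed

lemma sum_overlap_coeff:
  fixes b :: "nat \<Rightarrow> real"
  assumes d: "d \<ge> 2" and j: "j < N"
  shows "(\<Sum>l<N. \<Sum>l'<N. b l * b l' * overlap_coeff d (card {j, l, l'}))
       = (2 * (\<Sum>l<N. b l)^2 + (real d - 1) * ((\<Sum>l<N. (b l)^2) + 2 * b j * (\<Sum>l<N. b l))
          + (real d - 1)^2 * (b j)^2) / (real d + 1)"
proof -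
  define s where "s = (\<Sum>l<N. b l)"
  have "(real d + 1) * (\<Sum>l<N. \<Sum>l'<N. b l * b l' * overlap_coeff d (card {j, l, l'}))
      = (\<Sum>l<N. \<Sum>l'<N. 2 * (b l * b l') + (real d - 1) * (if l' = l then (b l)^2 else 0)
          + (real d - 1) * ((if l = j then b j else 0) * b l') + (real d - 1) * (b l * (if l' = j then b j else 0))
          + (real d - 1)^2 * ((if l = j then b j else 0) * (if l' = j then b j else 0)))"
    unfolding sum_distrib_left
    by (intro sum.cong refl) (simp add: overlap_coeff_card[OF d] field_simps power2_eq_square)
  also have "\<dots> = 2 * s^2 + (real d - 1) * (\<Sum>l<N. (b l)^2) + (real d - 1) * (b j * s)
      + (real d - 1) * (s * b j) + (real d - 1)^2 * (b j)^2"
    using j by (simp add: sum.distrib sum_distrib_left[symmetric] sum_distrib_right[symmetric]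
        s_def power2_eq_square)
  finally show ?thesis
    by (simp add: s_def field_simps)
qed

lemma marginal_T_beta_basis0_closed:
  fixes \<beta> :: "nat \<Rightarrow> real"
  assumes d: "d \<ge> 2" and i: "i \<in> {1..N}"
  defines "s \<equiv> \<Sum>l=1..N. \<beta> l" and "B \<equiv> \<Sum>l=1..N. (\<beta> l)^2"
  shows "marginal d N i (T_beta d N \<beta> (pure_state basis0)) 0 0
       = of_real ((2 * s^2 + (real d - 1) * (B + 2 * \<beta> i * s) + (real d - 1)^2 * (\<beta> i)^2) / (real d + 1))"
proof -
  define j where "j = i - 1"
  have j: "j < N" "j + 1 = i" using i by (auto simp: j_def)
  have "marginal d N i (T_beta d N \<beta> (pure_state basis0)) 0 0
      = of_real (diag_scale d N * (\<Sum>l<N. \<Sum>l'<N. \<beta> (l + 1) * \<beta> (l' + 1) *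
            real (fact (card {j, l, l'} - 1) * pochhammer (d + card {j, l, l'} - 1) (N - card {j, l, l'}))))"
    using i d j by (simp add: marginal_T_beta_basis0 sum_stab_weight_zero_weight_sq j_def)
  also have "\<dots> = of_real (\<Sum>l<N. \<Sum>l'<N. \<beta> (l + 1) * \<beta> (l' + 1) *
      (diag_scale d N * real (fact (card {j, l, l'} - 1) * pochhammer (d + card {j, l, l'} - 1) (N - card {j, l, l'}))))"
    by (simp add: sum_distrib_left mult_ac)
  also have "\<dots> = of_real (\<Sum>l<N. \<Sum>l'<N. \<beta> (l + 1) * \<beta> (l' + 1) * overlap_coeff d (card {j, l, l'}))"
  proof -
    have "diag_scale d N * real (fact (card {j, l, l'} - 1) * pochhammer (d + card {j, l, l'} - 1) (N - card {j, l, l'}))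
        = overlap_coeff d (card {j, l, l'})" if "l < N" "l' < N" for l l'
      using d card_mono[of "{..<N}" "{j, l, l'}"] that j
      by (intro diag_scale_mult_eq_overlap_coeff) (auto simp: card_gt_0_iff Suc_le_eq)
    then show ?thesis by simp
  qed
  also have "\<dots> = of_real ((2 * s^2 + (real d - 1) * (B + 2 * \<beta> i * s) + (real d - 1)^2 * (\<beta> i)^2) / (real d + 1))"
    using sum_overlap_coeff[OF d j(1), of "\<lambda>l. \<beta> (l + 1)"] j
    by (simp add: s_def B_def sum.atLeast1_atMost_eq)
  finally show ?thesis .
qed

lemma basis0_normalised: "d \<ge> 1 \<Longrightarrow> (\<Sum>a<d. (cmod (basis0 a))^2) = 1"
  by (simp add: basis0_def lessThan_atLeast0 sum.atLeast_Suc_lessThan)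

lemma depolarizing_parameter_eq:
  fixes \<beta> :: "nat \<Rightarrow> real"
  assumes d: "d \<ge> 2" and i: "i \<in> {1..N}"
    and norm: "(real d - 1) * (\<Sum>l=1..N. (\<beta> l)^2) + (\<Sum>l=1..N. \<beta> l)^2 = 1"
    and entry: "marginal d N i (T_beta d N \<beta> (pure_state basis0)) 0 0 = of_real (p + (1 - p) / real d)"
  shows "((real d)^2 - 1) * p + 1 = real d * ((real d - 1) * \<beta> i + (\<Sum>l=1..N. \<beta> l))^2"
proof -
  define s where "s = (\<Sum>l=1..N. \<beta> l)"
  define M where "M = p + (1 - p) / real d"
  have "complex_of_real M = of_real ((2 * s^2 + (real d - 1) * ((\<Sum>l=1..N. (\<beta> l)^2) + 2 * \<beta> i * s)
      + (real d - 1)^2 * (\<beta> i)^2) / (real d + 1))"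
    unfolding M_def s_def using entry[symmetric] marginal_T_beta_basis0_closed[OF d i, of \<beta>] by (rule trans)
  then have "M = (2 * s^2 + (real d - 1) * ((\<Sum>l=1..N. (\<beta> l)^2) + 2 * \<beta> i * s)
      + (real d - 1)^2 * (\<beta> i)^2) / (real d + 1)"
    by (simp only: of_real_eq_iff)
  then have sum_form: "(real d + 1) * M = 1 + ((real d - 1) * \<beta> i + s)^2"
    using norm by (simp add: s_def field_simps power2_eq_square)
  have param_form: "real d * M = real d * p + 1 - p" using d by (simp add: M_def field_simps)
  have "((real d)^2 - 1) * p + 1 = (real d + 1) * (real d * M - 1) + 1"
    unfolding param_form by (simp add: power2_eq_square algebra_simps)
  also have "\<dots> = real d * ((real d + 1) * M) - real d" by (simp add: algebra_simps)
  finally show ?thesis unfolding sum_form by (simp add: s_def algebra_simps)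
qed

lemma sum_scaled_plus_total:
  fixes \<beta> :: "'a \<Rightarrow> real"
  shows "(\<Sum>i\<in>I. c * \<beta> i + sum \<beta> I) = (c + real (card I)) * sum \<beta> I"
  by (simp add: sum.distrib algebra_simps flip: sum_distrib_left)

lemma sum_sq_scaled_plus_total:
  fixes \<beta> :: "'a \<Rightarrow> real"
  shows "(\<Sum>i\<in>I. (c * \<beta> i + sum \<beta> I)^2)
       = c^2 * (\<Sum>i\<in>I. (\<beta> i)^2) + (2 * c + real (card I)) * (sum \<beta> I)^2"
proof -
  have "(\<Sum>i\<in>I. (c * \<beta> i + sum \<beta> I)^2)
      = (\<Sum>i\<in>I. c^2 * (\<beta> i)^2 + 2 * c * sum \<beta> I * \<beta> i + (sum \<beta> I)^2)"
    by (intro sum.cong) (simp_all add: power2_eq_square algebra_simps)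
  also have "\<dots> = c^2 * (\<Sum>i\<in>I. (\<beta> i)^2) + 2 * c * sum \<beta> I * sum \<beta> I + real (card I) * (sum \<beta> I)^2"
    by (simp add: sum.distrib flip: sum_distrib_left)
  finally show ?thesis by (simp add: power2_eq_square algebra_simps)
qed

lemma sum_sqrt_depolarizing_identity:
  fixes \<beta> p :: "nat \<Rightarrow> real" and d N :: nat
  assumes d: "d \<ge> 2" and nonneg: "\<forall>i\<in>{1..N}. \<beta> i \<ge> 0"
    and norm: "(real d - 1) * (\<Sum>i=1..N. (\<beta> i)^2) + (\<Sum>i=1..N. \<beta> i)^2 = 1"
    and param: "\<forall>i\<in>{1..N}. ((real d)^2 - 1) * p i + 1 = real d * ((real d - 1) * \<beta> i + (\<Sum>l=1..N. \<beta> l))^2"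
  shows "real N + ((real d)^2 - 1) * (\<Sum>i=1..N. p i)
         = real d * (real d - 1) + (\<Sum>i=1..N. sqrt (((real d)^2 - 1) * p i + 1))^2 / real (N + d - 1)"
proof -
  define s where "s = (\<Sum>i=1..N. \<beta> i)"
  define q where "q i = (real d - 1) * \<beta> i + s" for i
  have NdN: "real (N + d - 1) = real N + real d - 1" using d by (simp add: of_nat_diff)
  have "s \<ge> 0" unfolding s_def using nonneg by (intro sum_nonneg) auto
  then have sqrt_q: "sqrt (((real d)^2 - 1) * p i + 1) = sqrt (real d) * q i" if "i \<in> {1..N}" for i
    using param nonneg d that by (simp add: q_def s_def real_sqrt_mult)
  have "real N + ((real d)^2 - 1) * (\<Sum>i=1..N. p i) = (\<Sum>i=1..N. ((real d)^2 - 1) * p i + 1)"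
    by (simp add: sum.distrib sum_distrib_left)
  also have "\<dots> = real d * (\<Sum>i=1..N. (q i)^2)"
    using param by (simp add: q_def s_def sum_distrib_left)
  also have "\<dots> = real d * (real d - 1) + real d * s^2 * real (N + d - 1)"
  proof -
    have s_sq: "s^2 = 1 - (real d - 1) * (\<Sum>i=1..N. (\<beta> i)^2)" using norm by (simp add: s_def)
    have sum_q_sq: "(\<Sum>i=1..N. (q i)^2) = (real d - 1)^2 * (\<Sum>i=1..N. (\<beta> i)^2) + (2 * (real d - 1) + real N) * s^2"
      using sum_sq_scaled_plus_total[of "real d - 1" \<beta> "{1..N}"] by (simp add: q_def s_def)
    show ?thesis
      unfolding sum_q_sq NdN s_sq by (simp add: power2_eq_square algebra_simps)
  qed
  also have "\<dots> = real d * (real d - 1) + (\<Sum>i=1..N. sqrt (((real d)^2 - 1) * p i + 1))^2 / real (N + d - 1)"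
  proof -
    have "(\<Sum>i=1..N. sqrt (((real d)^2 - 1) * p i + 1)) = sqrt (real d) * (\<Sum>i=1..N. q i)"
      by (simp add: sqrt_q sum_distrib_left)
    also have "(\<Sum>i=1..N. q i) = real (N + d - 1) * s"
      unfolding NdN using sum_scaled_plus_total[of "real d - 1" \<beta> "{1..N}"]
      by (simp add: q_def s_def algebra_simps)
    finally show ?thesis
      using d by (simp add: power_mult_distrib power2_eq_square)
  qed
  finally show ?thesis .
qed

theorem mainTheorem16:
  fixes d N :: nat and \<beta> p :: "nat \<Rightarrow> real"
  assumes "d \<ge> 2" and "N \<ge> 1"
    and "\<forall>i\<in>{1..N}. \<beta> i > 0"
    and "(real d - 1) * (\<Sum>i=1..N. (\<beta> i)^2) + (\<Sum>i=1..N. \<beta> i)^2 = 1"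
    and "\<forall>i\<in>{1..N}. \<forall>v :: nat \<Rightarrow> complex. (\<Sum>a<d. (cmod (v a))^2) = 1 \<longrightarrow>
           (\<forall>a<d. \<forall>b<d. marginal d N i (T_beta d N \<beta> (pure_state v)) a b =
              of_real (p i) * pure_state v a b
              + of_real (1 - p i) * (if a = b then 1 / of_nat d else 0))"
  shows "real N + ((real d)^2 - 1) * (\<Sum>i=1..N. p i)
         = real d * (real d - 1)
           + (\<Sum>i=1..N. sqrt (((real d)^2 - 1) * p i + 1))^2 / real (N + d - 1)"
proof (rule sum_sqrt_depolarizing_identity)
  show "\<forall>i\<in>{1..N}. ((real d)^2 - 1) * p i + 1 = real d * ((real d - 1) * \<beta> i + (\<Sum>l=1..N. \<beta> l))^2"
  proof
    fix i assume i: "i \<in> {1..N}"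
    have "marginal d N i (T_beta d N \<beta> (pure_state basis0)) 0 0 = of_real (p i + (1 - p i) / real d)"
      using assms(1) assms(5)[rule_format, OF i basis0_normalised, of 0 0]
      by (simp add: pure_state_def basis0_def)
    then show "((real d)^2 - 1) * p i + 1 = real d * ((real d - 1) * \<beta> i + (\<Sum>l=1..N. \<beta> l))^2"
      using depolarizing_parameter_eq[OF assms(1) i assms(4)] by blast
  qed
qed (use assms in auto)

end
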